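(* Let $H$ and $G$ be bipartite graphs with vertex classes $\tilde U\dot\cup\tilde V$ and $U\dot\cup V$ respectively, such that $\deg_H(\tilde v)\le\Delta$ for all $\tilde v\in\tilde V$, and let $f,f':\tilde V\to V$ be injective functions with switching distance $\mathrm{sw}(f,f')\le s$. Then the neighbourhood distance of the candidate graphs satisfies $\mathrm{nd}_{\tilde U}(B_f(H,G),B_{f'}(H,G))\le 2s\Delta$.
   Context: For an injective $f:\tilde V\to V$, a vertex $u\in U$ is an $f$-candidate for $\tilde u\in\tilde U$ if $f(N_H(\tilde u))\subseteq N_G(u)$; the candidate graph $B_f(H,G)$ is the bipartite graph on $\tilde U\dot\cup U$ whose edges are the pairs $\tilde uu$ with $u$ an $f$-candidate for $\tilde u$. An injective $f'$ is obtained from an injective $f$ by a switching if there are $a,b$ in the domain with $f'(a)=f(b)$, $f'(b)=f(a)$ and $f'(w)=f(w)$ for all $w\notin\{a,b\}$; $\mathrm{sw}(f,f')\le s$ means $f'$ is obtainable from $f$ by a sequence of at most $s$ switchings. For bipartite graphs $B,B'$ on the same vertex set $\tilde U\dot\cup U$, $\mathrm{nd}_{\tilde U}(B,B')$ is the number of $\tilde u\in\tilde U$ with $N_B(\tilde u)\ne N_{B'}(\tilde u)$. *)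

theory Defs
  imports Main
begin

definition bipartite_graph :: "'x set \<Rightarrow> 'y set \<Rightarrow> ('x \<times> 'y) set \<Rightarrow> bool" where
  "bipartite_graph X Y E \<longleftrightarrow> finite X \<and> finite Y \<and> E \<subseteq> X \<times> Y"

definition nbhd1 :: "('x \<times> 'y) set \<Rightarrow> 'x \<Rightarrow> 'y set" where
  "nbhd1 E x = {y. (x, y) \<in> E}"

definition nbhd2 :: "('x \<times> 'y) set \<Rightarrow> 'y \<Rightarrow> 'x set" where
  "nbhd2 E y = {x. (x, y) \<in> E}"

definition candidate_graph ::
  "'ut set \<Rightarrow> ('ut \<times> 'vt) set \<Rightarrow> 'u set \<Rightarrow> ('u \<times> 'v) set \<Rightarrow> ('vt \<Rightarrow> 'v) \<Rightarrow> ('ut \<times> 'u) set" where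
  "candidate_graph Ut H U G f = {(ut, u). ut \<in> Ut \<and> u \<in> U \<and> f ` (nbhd1 H ut) \<subseteq> nbhd1 G u}"

definition switching :: "'a set \<Rightarrow> ('a \<Rightarrow> 'b) \<Rightarrow> ('a \<Rightarrow> 'b) \<Rightarrow> bool" where
  "switching A f f' \<longleftrightarrow> (\<exists>a\<in>A. \<exists>b\<in>A. f' a = f b \<and> f' b = f a \<and> (\<forall>w\<in>A - {a, b}. f' w = f w))"

definition sw_le :: "'a set \<Rightarrow> ('a \<Rightarrow> 'b) \<Rightarrow> ('a \<Rightarrow> 'b) \<Rightarrow> nat \<Rightarrow> bool" where
  "sw_le A f f' s \<longleftrightarrow> (\<exists>k \<le> s. \<exists>g :: nat \<Rightarrow> 'a \<Rightarrow> 'b.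
      g 0 = f \<and> (\<forall>w\<in>A. g k w = f' w) \<and> (\<forall>i\<le>k. inj_on (g i) A) \<and>
      (\<forall>i<k. switching A (g i) (g (Suc i))))"

definition nd :: "'x set \<Rightarrow> ('x \<times> 'y) set \<Rightarrow> ('x \<times> 'y) set \<Rightarrow> nat" where
  "nd X B B' = card {x \<in> X. nbhd1 B x \<noteq> nbhd1 B' x}"

end

theory Submission
  imports Defs
begin

text \<open>Each switching moves at most two points, so f and f' differ on at most 2s vertices of
  the domain. The candidate neighbourhood of a vertex depends only on the values of f on its
  H-neighbourhood, so it can change only for vertices adjacent to one of these at most 2s
  vertices, of which there are at most 2s\<Delta>.\<close>

lemma card_moved_by_switchings:
  assumes "\<forall>i<k. switching A (g i) (g (Suc i))"
  shows "finite {w\<in>A. g k w \<noteq> g 0 w} \<and> card {w\<in>A. g k w \<noteq> g 0 w} \<le> 2 * k"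
  using assms
proof (induction k)
  case 0
  then show ?case by simp
next
  case (Suc k)
  let ?M = "{w\<in>A. g k w \<noteq> g 0 w}"
  from Suc have IH: "finite ?M" "card ?M \<le> 2 * k" by auto
  from Suc.prems obtain a b where "\<forall>w\<in>A - {a, b}. g (Suc k) w = g k w"
    unfolding switching_def by blast
  then have sub: "{w\<in>A. g (Suc k) w \<noteq> g 0 w} \<subseteq> ?M \<union> {a, b}" by auto
  have "card (?M \<union> {a, b}) \<le> card ?M + card {a, b}" by (rule card_Un_le)
  also have "\<dots> \<le> 2 * Suc k" using IH by (simp add: card_insert_if)
  finally have "card (?M \<union> {a, b}) \<le> 2 * Suc k" .
  moreover have "finite (?M \<union> {a, b})" using IH by simp
  ultimately show ?case using card_mono[OF _ sub] finite_subset[OF sub] by simp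
qed

lemma sw_le_card_moved:
  assumes "sw_le A f f' s"
  shows "finite {w\<in>A. f' w \<noteq> f w} \<and> card {w\<in>A. f' w \<noteq> f w} \<le> 2 * s"
proof -
  from assms obtain k g where k: "k \<le> s" "g 0 = f" "\<forall>w\<in>A. g k w = f' w"
    "\<forall>i<k. switching A (g i) (g (Suc i))" unfolding sw_le_def by blast
  then have "{w\<in>A. f' w \<noteq> f w} = {w\<in>A. g k w \<noteq> g 0 w}" by auto
  with card_moved_by_switchings[OF k(4)] k(1) show ?thesis by auto
qed

lemma nbhd1_candidate_graph_cong:
  assumes "\<forall>w\<in>nbhd1 H ut. f w = f' w"
  shows "nbhd1 (candidate_graph Ut H U G f) ut = nbhd1 (candidate_graph Ut H U G f') ut"
proof -
  from assms have "f ` nbhd1 H ut = f' ` nbhd1 H ut" by (auto simp: image_def)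
  then show ?thesis unfolding candidate_graph_def nbhd1_def by simp
qed

lemma candidate_graph_changes_subset:
  assumes "H \<subseteq> Ut \<times> Vt"
  shows "{ut\<in>Ut. nbhd1 (candidate_graph Ut H U G f) ut \<noteq> nbhd1 (candidate_graph Ut H U G f') ut}
    \<subseteq> (\<Union>w\<in>{w\<in>Vt. f' w \<noteq> f w}. nbhd2 H w)"
proof
  fix ut
  assume changed: "ut \<in> {ut\<in>Ut. nbhd1 (candidate_graph Ut H U G f) ut
                             \<noteq> nbhd1 (candidate_graph Ut H U G f') ut}"
  show "ut \<in> (\<Union>w\<in>{w\<in>Vt. f' w \<noteq> f w}. nbhd2 H w)"
  proof (rule ccontr)
    assume "ut \<notin> (\<Union>w\<in>{w\<in>Vt. f' w \<noteq> f w}. nbhd2 H w)"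
    then have "\<forall>w\<in>nbhd1 H ut. f w = f' w"
      using assms unfolding nbhd1_def nbhd2_def by auto
    then have "nbhd1 (candidate_graph Ut H U G f) ut = nbhd1 (candidate_graph Ut H U G f') ut"
      by (rule nbhd1_candidate_graph_cong)
    with changed show False by simp
  qed
qed

lemma card_UN_le_mult:
  assumes "finite D" and "\<And>w. w \<in> D \<Longrightarrow> card (N w) \<le> \<Delta>"
  shows "card (\<Union>w\<in>D. N w) \<le> card D * \<Delta>"
proof -
  have "card (\<Union>w\<in>D. N w) \<le> (\<Sum>w\<in>D. card (N w))"
    using assms(1) by (rule card_UN_le)
  also have "\<dots> \<le> (\<Sum>w\<in>D. \<Delta>)" using assms(2) by (rule sum_mono)
  finally show ?thesis by simp
qed

theorem lemma11p4:
  fixes Ut :: "'ut set" and Vt :: "'vt set" and U :: "'u set" and V :: "'v set"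
    and H :: "('ut \<times> 'vt) set" and G :: "('u \<times> 'v) set"
    and f f' :: "'vt \<Rightarrow> 'v" and s \<Delta> :: nat
  assumes "bipartite_graph Ut Vt H" and "bipartite_graph U V G"
    and "\<forall>vt\<in>Vt. card (nbhd2 H vt) \<le> \<Delta>"
    and "inj_on f Vt" and "f ` Vt \<subseteq> V"
    and "inj_on f' Vt" and "f' ` Vt \<subseteq> V"
    and "sw_le Vt f f' s"
  shows "nd Ut (candidate_graph Ut H U G f) (candidate_graph Ut H U G f') \<le> 2 * s * \<Delta>"
proof -
  define D where "D = {w\<in>Vt. f' w \<noteq> f w}"
  have D: "finite D" "card D \<le> 2 * s" using sw_le_card_moved[OF assms(8)] by (auto simp: D_def)
  have H: "finite Ut" "H \<subseteq> Ut \<times> Vt" using assms(1) by (auto simp: bipartite_graph_def)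
  have "(\<Union>w\<in>D. nbhd2 H w) \<subseteq> Ut" using H(2) by (auto simp: nbhd2_def)
  then have "finite (\<Union>w\<in>D. nbhd2 H w)" using H(1) finite_subset by blast
  then have "nd Ut (candidate_graph Ut H U G f) (candidate_graph Ut H U G f')
      \<le> card (\<Union>w\<in>D. nbhd2 H w)"
    unfolding nd_def D_def using candidate_graph_changes_subset[OF H(2)] by (rule card_mono)
  also have "\<dots> \<le> card D * \<Delta>"
    using card_UN_le_mult[OF D(1)] assms(3) by (auto simp: D_def)
  also have "\<dots> \<le> 2 * s * \<Delta>" using D(2) by simp
  finally show ?thesis .
qed

end
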